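(* Let $M=p_1^{n_1}\cdots p_K^{n_K}$ with distinct primes and $n_\nu\in\mathbb{N}$, let $A\oplus B=\mathbb{Z}_M$, and fix $i\in\{1,\dots,K\}$. Then the following are equivalent: (I) $\Phi_{p_i^{n_i}}(X)\mid A(X)$, and for every $m$ with $p_i^{n_i}\mid m\mid M$, $m\in\mathrm{Div}(A)$ implies $m/p_i\notin\mathrm{Div}(B)$; (II) for every $r\in R$, the tiling $A\oplus rB=\mathbb{Z}_M$ has uniform $(rB,A)$ splitting parity in the $p_i$ direction, i.e. every fiber $z*F_i$, $z\in\mathbb{Z}_M$, splits with parity $(rB,A)$ with respect to the tiling $A\oplus rB=\mathbb{Z}_M$; (III) for every $a\in A$, $b\in B$ and every $x\in a*F_i$, we have $A_{x,b}\subset\Pi(x,p_i^{n_i})$.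
   Context: $A\oplus B=\mathbb{Z}_M$ means every element of $\mathbb{Z}_M$ is uniquely $a+b$ with $a\in A$, $b\in B$. $A(X)=\sum_{a\in A}X^a$ ($A$ viewed in $\{0,\dots,M-1\}$), $\Phi_s$ the $s$-th cyclotomic polynomial. $(x,M)=\gcd(x,M)$; $\mathrm{Div}(A)=\{(a-a',M):a,a'\in A\}$. $R=\{r\in\mathbb{Z}_M:(r,M)=1\}$, $rB=\{rb:b\in B\}$. $\Pi(y,p_i^\alpha)=\{y'\in\mathbb{Z}_M:p_i^\alpha\mid y-y'\}$. $F_i=\{0,M/p_i,\dots,(p_i-1)M/p_i\}$, $x*F_i=\{x+f:f\in F_i\}$. For $x,y\in\mathbb{Z}_M$, $A_{x,y}=\{a\in A:(x-a,M)=(y-b',M)\text{ for some }b'\in B\}$. For a tiling $A\oplus C=\mathbb{Z}_M$ and $Z\subset\mathbb{Z}_M$, $\Sigma_A(Z)=\{a\in A:a+c\in Z\text{ for some }c\in C\}$, $\Sigma_C(Z)$ analogously. A fiber $Z=z*F_i$ splits with parity $(C,A)$ if $p_i^{n_i}\mid c-c'$ for all $c,c'\in\Sigma_C(Z)$ and, for all distinct $a,a'\in\Sigma_A(Z)$, $p_i^{n_i-1}\mid a-a'$ but $p_i^{n_i}\nmid a-a'$. *)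

theory Defs
  imports Complex_Main "HOL-Computational_Algebra.Polynomial" "HOL-Computational_Algebra.Primes"
begin

text \<open>Z_M is represented by the integers {0..<M}; all arithmetic is taken mod M.\<close>

definition ZM :: "int \<Rightarrow> int set" where
  "ZM M = {0..<M}"

definition tiling :: "int \<Rightarrow> int set \<Rightarrow> int set \<Rightarrow> bool" where
  "tiling M A C \<longleftrightarrow> A \<subseteq> ZM M \<and> C \<subseteq> ZM M \<and>
     (\<forall>x\<in>ZM M. \<exists>!ac. fst ac \<in> A \<and> snd ac \<in> C \<and> (fst ac + snd ac) mod M = x)"

definition mask_poly :: "int set \<Rightarrow> complex poly" where
  "mask_poly A = (\<Sum>a\<in>A. monom 1 (nat a))"

definition cyclotomic :: "nat \<Rightarrow> complex poly" where
  "cyclotomic s = (\<Prod>k\<in>{k. k < s \<and> coprime k s}. [:- cis (2 * pi * real k / real s), 1:])"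

definition Div :: "int \<Rightarrow> int set \<Rightarrow> int set" where
  "Div M A = {gcd (a - a') M | a a'. a \<in> A \<and> a' \<in> A}"

definition units_ZM :: "int \<Rightarrow> int set" where
  "units_ZM M = {r \<in> ZM M. coprime r M}"

definition dil :: "int \<Rightarrow> int \<Rightarrow> int set \<Rightarrow> int set" where
  "dil M r B = {(r * b) mod M | b. b \<in> B}"

definition Pi_plane :: "int \<Rightarrow> int \<Rightarrow> int \<Rightarrow> int set" where
  "Pi_plane M y q = {y' \<in> ZM M. q dvd y - y'}"

definition fiber_set :: "int \<Rightarrow> int \<Rightarrow> int set" where
  "fiber_set M p = {k * (M div p) | k. 0 \<le> k \<and> k < p}"

definition fiber :: "int \<Rightarrow> int \<Rightarrow> int \<Rightarrow> int set" where
  "fiber M p x = {(x + f) mod M | f. f \<in> fiber_set M p}"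

definition A_xy :: "int \<Rightarrow> int set \<Rightarrow> int set \<Rightarrow> int \<Rightarrow> int \<Rightarrow> int set" where
  "A_xy M A B x y = {a \<in> A. \<exists>b'\<in>B. gcd (x - a) M = gcd (y - b') M}"

definition Sigma_set :: "int \<Rightarrow> int set \<Rightarrow> int set \<Rightarrow> int set \<Rightarrow> int set" where
  "Sigma_set M A C Z = {a \<in> A. \<exists>c\<in>C. (a + c) mod M \<in> Z}"

definition splits_parity :: "int \<Rightarrow> int \<Rightarrow> nat \<Rightarrow> int set \<Rightarrow> int set \<Rightarrow> int set \<Rightarrow> bool" where
  "splits_parity M p n C A Z \<longleftrightarrow>
     (\<forall>c\<in>Sigma_set M C A Z. \<forall>c'\<in>Sigma_set M C A Z. p ^ n dvd c - c') \<and>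
     (\<forall>a\<in>Sigma_set M A C Z. \<forall>a'\<in>Sigma_set M A C Z. a \<noteq> a' \<longrightarrow>
         p ^ (n - 1) dvd a - a' \<and> \<not> p ^ n dvd a - a')"

end

theory Submission
  imports Defs "HOL-Number_Theory.Cong" "HOL-Library.Real_Mod"
begin

text \<open>
  Write q = p^n for the full power of p dividing M, and h = M/p. All three conditions turn out
  to be equivalent to one pivot condition, \<open>fiber_B_cong\<close>: whenever a + r b and a' + r b'
  (with a, a' in A, b, b' in B and r a unit mod M) lie in the same p-fiber, i.e. agree modulo h,
  then b and b' agree modulo q.

  Two classical facts about a tiling A + B = Z_M carry the translations. Tijdeman's theorem says
  that A + rB is again a tiling for every unit r: for a prime l not dividing M,
  A(X) B(X^l) is congruent to A(X) B(X)^l, hence to |B|^(l-1) (1 + X + ... + X^(M-1)), modulo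
  l and X^M - 1, and l does not divide |B|, so every residue mod M is hit. Its consequence, Sands'
  theorem, says that gcd(a - a', M) = gcd(b - b', M) forces a = a'. The rest is gcd bookkeeping:
  gcd(x, h) = gcd(x, M) unless q divides gcd(x, M), in which case it is gcd(x, M)/p.

  For the cyclotomic divisibility, translation by h permutes Z_M and, under the pivot condition,
  moves the A-component of each point by h modulo q. Hence the sum of zeta^a over a in A equals
  zeta^h times itself for every primitive q-th root of unity zeta, and zeta^h is not 1.
\<close>

lemma coprime_if_no_common_prime:
  fixes a b :: int
  assumes "\<And>l. prime l \<Longrightarrow> l dvd b \<Longrightarrow> \<not> l dvd a" and "b \<noteq> 0"
  shows "coprime a b"
proof (rule ccontr)
  assume "\<not> coprime a b"
  then have "\<not> is_unit (gcd a b)" "gcd a b \<noteq> 0"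
    using assms(2) by (auto simp: coprime_iff_gcd_eq_1 is_unit_gcd)
  then obtain l where "prime l" "l dvd gcd a b"
    using prime_divisor_exists by blast
  then show False
    using assms(1) by auto
qed

lemma coprime_lift_mod:
  fixes M N s0 :: int
  assumes "M \<noteq> 0" and "coprime s0 N"
  obtains s where "[s = s0] (mod N)" and "coprime s M"
proof -
  define P where "P = {l \<in> prime_factors M. \<not> l dvd s0}"
  define s where "s = s0 + N * \<Prod>P"
  have finP: "finite P"
    unfolding P_def by simp
  (* Every prime factor of M divides exactly one of s0 and N * \<Prod>P. *)
  have no_common_prime: "\<not> l dvd s" if l: "prime l" "l dvd M" for l
  proof (cases "l dvd s0")
    case True
    then have "\<not> l dvd N"
      using assms(2) l(1) by (meson coprime_common_divisor not_prime_unit)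
    moreover have "\<not> l dvd \<Prod>P"
    proof
      assume "l dvd \<Prod>P"
      then obtain l' where "l' \<in> P" "l dvd l'"
        using prime_dvd_prod_iff[OF finP l(1)] by auto
      then show False
        using True l(1) unfolding P_def by (auto dest: primes_dvd_imp_eq)
    qed
    ultimately have "\<not> l dvd N * \<Prod>P"
      using l(1) prime_dvd_mult_iff by blast
    then show ?thesis
      using True unfolding s_def by (simp add: dvd_add_right_iff)
  next
    case False
    have "l \<in> P"
      unfolding P_def using False l assms(1) by (auto simp: in_prime_factors_iff)
    then have "l dvd N * \<Prod>P"
      using finP dvd_prodI[of P l id] by (simp add: dvd_mult)
    then show ?thesis
      using False unfolding s_def by (simp add: dvd_add_left_iff)
  qed
  then have "coprime s M"
    using assms(1) by (rule coprime_if_no_common_prime)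
  moreover have "[s = s0] (mod N)"
    unfolding s_def by (simp add: cong_iff_dvd_diff)
  ultimately show thesis
    using that by blast
qed

lemma gcd_eq_imp_unit_multiple:
  fixes x y N M :: int
  assumes "M \<noteq> 0" and "N \<noteq> 0" and "gcd x N = gcd y N"
  obtains s where "coprime s M" and "N dvd y - s * x"
proof -
  define d where "d = gcd x N"
  have "d > 0"
    using assms(2) unfolding d_def by simp
  obtain x' y' N' where xyN: "x = d * x'" "y = d * y'" "N = d * N'"
    using gcd_dvd1[of x N] gcd_dvd1[of y N] gcd_dvd2[of x N] assms(3)
    unfolding d_def by (metis dvdE)
  have "d * gcd x' N' = gcd x N" "d * gcd y' N' = gcd y N"
    using \<open>d > 0\<close> by (simp_all add: xyN gcd_mult_left)
  then have "d * gcd x' N' = d * 1" "d * gcd y' N' = d * 1"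
    using assms(3) by (simp_all add: d_def)
  then have "coprime x' N'" "coprime y' N'"
    using \<open>d > 0\<close> by (simp_all add: coprime_iff_gcd_eq_1)
  then obtain i where i: "[x' * i = 1] (mod N')"
    using cong_solve_coprime_int by blast
  then have "coprime (i * y') N'"
    using \<open>coprime y' N'\<close> by (metis cong_imp_coprime cong_sym coprime_1_left coprime_mult_left_iff)
  then obtain s where s: "[s = i * y'] (mod N')" "coprime s M"
    using coprime_lift_mod[OF assms(1)] by blast
  have "[s * x' = i * y' * x'] (mod N')"
    using s(1) by (rule cong_mult) (rule cong_refl)
  also have "i * y' * x' = y' * (x' * i)"
    by (simp only: ac_simps)
  also have "[y' * (x' * i) = y' * 1] (mod N')"
    using i by (rule cong_mult[OF cong_refl])
  finally have "N' dvd y' - s * x'"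
    by (simp add: cong_iff_dvd_diff dvd_diff_commute)
  then have "d * N' dvd d * (y' - s * x')"
    by (rule mult_dvd_mono[OF dvd_refl])
  then have "N dvd y - s * x"
    using xyN by (simp add: algebra_simps)
  then show thesis
    using that s(2) by blast
qed

lemma dvd_prime_mult_cases:
  fixes g G p :: int
  assumes "prime p" and "g > 0" and "G > 0" and "g dvd G" and "G dvd p * g"
  shows "G = g \<or> G = p * g"
proof -
  obtain j where j: "G = g * j"
    using assms(4) by blast
  then have "j > 0"
    using assms(2,3) by (simp add: zero_less_mult_iff)
  moreover have "j dvd p"
    using assms(2,5) j by (simp add: mult.commute)
  ultimately have "j = 1 \<or> j = p"
    using assms(1) by (simp add: prime_int_iff)
  then show ?thesis
    using j by auto
qed

lemma cong_mod_dvd_modulus: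
  fixes x m d :: int
  assumes "d dvd m"
  shows "[x mod m = x] (mod d)"
  using assms by (simp add: cong_def mod_mod_cancel)

section \<open>Polynomial congruences\<close>

lemma frobenius_add:
  fixes x y :: "'a::comm_ring_1"
  assumes "prime L"
  shows "\<exists>R. (x + y) ^ L = x ^ L + y ^ L + of_nat L * R"
proof -
  have "L > 0"
    using assms prime_gt_0_nat by blast
  define R where "R = (\<Sum>k\<in>{1..<L}. of_nat ((L choose k) div L) * x ^ k * y ^ (L - k))"
  have "(x + y) ^ L = (\<Sum>k\<le>L. of_nat (L choose k) * x ^ k * y ^ (L - k))"
    by (rule binomial_ring)
  also have "{..L} = insert 0 (insert L {1..<L})"
    using \<open>L > 0\<close> by auto
  also have "(\<Sum>k\<in>insert 0 (insert L {1..<L}). of_nat (L choose k) * x ^ k * y ^ (L - k))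
      = y ^ L + x ^ L + (\<Sum>k\<in>{1..<L}. of_nat (L choose k) * x ^ k * y ^ (L - k))"
    using \<open>L > 0\<close> by (simp add: add.assoc)
  also have "(\<Sum>k\<in>{1..<L}. of_nat (L choose k) * x ^ k * y ^ (L - k)) = of_nat L * R"
    unfolding R_def sum_distrib_left
  proof (rule sum.cong[OF refl])
    fix k assume "k \<in> {1..<L}"
    then have "L choose k = L * ((L choose k) div L)"
      using dvd_choose_prime[of k L] assms by simp
    then show "of_nat (L choose k) * x ^ k * y ^ (L - k)
        = of_nat L * (of_nat ((L choose k) div L) * x ^ k * y ^ (L - k))"
      by (metis of_nat_mult mult.assoc)
  qed
  finally show ?thesis
    by (auto simp: ac_simps)
qed

lemma frobenius_sum:
  fixes f :: "'b \<Rightarrow> 'a::comm_ring_1"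
  assumes "prime L" and "finite S"
  shows "\<exists>R. (\<Sum>s\<in>S. f s) ^ L = (\<Sum>s\<in>S. f s ^ L) + of_nat L * R"
  using assms(2)
proof (induction S rule: finite_induct)
  case empty
  then show ?case
    using prime_gt_0_nat[OF assms(1)] by (intro exI[of _ 0]) (simp add: power_0_left)
next
  case (insert s S)
  obtain R where R: "(\<Sum>s\<in>S. f s) ^ L = (\<Sum>s\<in>S. f s ^ L) + of_nat L * R"
    using insert.IH by blast
  obtain R' where R': "(f s + (\<Sum>s\<in>S. f s)) ^ L = f s ^ L + (\<Sum>s\<in>S. f s) ^ L + of_nat L * R'"
    using frobenius_add[OF assms(1)] by blast
  show ?case
    using insert.hyps R R' by (intro exI[of _ "R + R'"]) (simp add: algebra_simps)
qed

definition poly_cong :: "int \<Rightarrow> nat \<Rightarrow> int poly \<Rightarrow> int poly \<Rightarrow> bool" where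
  "poly_cong l m P Q \<longleftrightarrow> (\<exists>R S. P - Q = smult l R + (monom 1 m - 1) * S)"

lemma poly_cong_sym: "poly_cong l m P Q \<Longrightarrow> poly_cong l m Q P"
  unfolding poly_cong_def
proof (elim exE)
  fix R S assume "P - Q = smult l R + (monom 1 m - 1) * S"
  then have "Q - P = smult l (- R) + (monom 1 m - 1) * (- S)"
    by (metis minus_diff_eq minus_add_distrib smult_minus_right mult_minus_right)
  then show "\<exists>R S. Q - P = smult l R + (monom 1 m - 1) * S"
    by blast
qed

lemma poly_cong_trans [trans]:
  "poly_cong l m P Q \<Longrightarrow> poly_cong l m Q T \<Longrightarrow> poly_cong l m P T"
  unfolding poly_cong_def
proof (elim exE)
  fix R S R' S'
  assume "P - Q = smult l R + (monom 1 m - 1) * S" "Q - T = smult l R' + (monom 1 m - 1) * S'"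
  then have "P - T = smult l (R + R') + (monom 1 m - 1) * (S + S')"
    by (simp add: algebra_simps smult_add_right eq_diff_eq)
  then show "\<exists>R S. P - T = smult l R + (monom 1 m - 1) * S"
    by blast
qed

lemma poly_cong_mult_right: "poly_cong l m P Q \<Longrightarrow> poly_cong l m (P * T) (Q * T)"
  unfolding poly_cong_def
proof (elim exE)
  fix R S assume "P - Q = smult l R + (monom 1 m - 1) * S"
  then have "P * T - Q * T = smult l (R * T) + (monom 1 m - 1) * (S * T)"
    by (metis left_diff_distrib distrib_right mult.assoc mult_smult_left)
  then show "\<exists>R S. P * T - Q * T = smult l R + (monom 1 m - 1) * S"
    by blast
qed

lemma poly_cong_mult_left: "poly_cong l m P Q \<Longrightarrow> poly_cong l m (T * P) (T * Q)"
  using poly_cong_mult_right[of l m P Q T] by (simp only: mult.commute)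

lemma poly_cong_smultI: "P - Q = smult l R \<Longrightarrow> poly_cong l m P Q"
  unfolding poly_cong_def by (intro exI[of _ R] exI[of _ 0]) simp

lemma poly_cong_dvdI:
  assumes "(monom 1 m - 1) dvd P - Q"
  shows "poly_cong l m P Q"
proof -
  obtain S where "P - Q = (monom 1 m - 1) * S"
    using assms by (elim dvdE)
  then show ?thesis
    unfolding poly_cong_def by (intro exI[of _ 0] exI[of _ S]) simp
qed

lemma poly_cong_coeff:
  assumes "poly_cong l m P Q" and "m > 0" and "\<And>j. m \<le> j \<Longrightarrow> coeff P j = coeff Q j"
  shows "l dvd coeff P j - coeff Q j"
proof -
  obtain R S where PQ: "P - Q = smult l R + monom 1 m * S - S"
    using assms(1) unfolding poly_cong_def by (auto simp: algebra_simps)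
  have coeff_diff: "coeff P i - coeff Q i
      = l * coeff R i + (if i < m then 0 else coeff S (i - m)) - coeff S i" for i
    using arg_cong[OF PQ, of "\<lambda>T. coeff T i"] by (simp add: coeff_monom_mult)
  have "l dvd coeff S i" for i
  proof (induction i rule: measure_induct_rule[where f = "\<lambda>i. degree S - i"])
    case (less i)
    show ?case
    proof (cases "i \<le> degree S")
      case True
      have "l dvd coeff S (i + m)"
        using less[of "i + m"] True assms(2) by (cases "i + m \<le> degree S") (auto simp: coeff_eq_0)
      moreover have "coeff S i = coeff S (i + m) - l * coeff R (i + m)"
        using coeff_diff[of "i + m"] assms(3)[of "i + m"] by simp
      ultimately show ?thesis
        by simp
    qed (simp add: coeff_eq_0)
  qed
  then show ?thesis
    using coeff_diff[of j] assms(3)[of j] by (cases "j < m") simp_all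
qed

lemma monom_mod_dvd:
  "(monom 1 m - 1 :: 'a::comm_ring_1 poly) dvd monom 1 k - monom 1 (k mod m)"
proof -
  have "monom 1 k = monom 1 (k mod m) * monom (1::'a) m ^ (k div m)"
    by (simp add: mult_monom monom_power mult.commute)
  then have "monom 1 k - monom 1 (k mod m) = monom 1 (k mod m) * (monom (1::'a) m ^ (k div m) - 1)"
    by (simp add: right_diff_distrib)
  moreover have "(monom 1 m - 1 :: 'a poly) dvd monom 1 m ^ (k div m) - 1"
    by (simp add: power_diff_1_eq)
  ultimately show ?thesis
    by simp
qed

lemma monom_diff_1_eq:
  "(monom 1 m - 1 :: 'a::comm_ring_1 poly) = (monom 1 1 - 1) * (\<Sum>k<m. monom 1 k)"
  using power_diff_1_eq[of "monom (1::'a) 1" m] by (simp add: monom_power)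

lemma sum_monom_mult_dvd:
  "(monom 1 m - 1 :: 'a::comm_ring_1 poly) dvd
     (\<Sum>k<m. monom 1 k) * Q - smult (poly Q 1) (\<Sum>k<m. monom 1 k)"
proof (induction Q)
  case 0
  then show ?case
    by simp
next
  case (pCons c Q)
  define S :: "'a poly" where "S = (\<Sum>k<m. monom 1 k)"
  have "pCons 0 T = monom 1 1 * T" for T :: "'a poly"
    by (simp add: monom_Suc)
  then have "S * pCons c Q = smult c S + monom 1 1 * (S * Q)"
    by simp
  then have "S * pCons c Q - smult (poly (pCons c Q) 1) S
      = monom 1 1 * (S * Q) - smult (poly Q 1) S"
    by (simp add: smult_add_left)
  also have "\<dots> = monom 1 1 * (S * Q - smult (poly Q 1) S) + smult (poly Q 1) ((monom 1 1 - 1) * S)"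
    by (simp add: right_diff_distrib left_diff_distrib smult_diff_right)
  moreover have "(monom 1 m - 1) dvd (monom 1 1 - 1) * S"
    unfolding S_def monom_diff_1_eq[of m, symmetric] by (rule dvd_refl)
  ultimately show ?case
    using pCons.IH unfolding S_def[symmetric] by (simp add: dvd_add dvd_mult dvd_smult)
qed

definition residue_poly :: "int \<Rightarrow> ('a \<Rightarrow> int) \<Rightarrow> 'a set \<Rightarrow> int poly" where
  "residue_poly M f S = (\<Sum>s\<in>S. monom 1 (nat (f s mod M)))"

lemma nat_mod_add_nat_mod:
  assumes "(M::int) > 0"
  shows "(nat (x mod M) + nat (y mod M)) mod nat M = nat ((x + y) mod M)"
proof -
  have "nat (x mod M) + nat (y mod M) = nat (x mod M + y mod M)"
    using assms by (simp add: nat_add_distrib)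
  then show ?thesis
    using assms by (simp add: nat_mod_distrib[symmetric] mod_add_eq)
qed

lemma residue_poly_mult:
  assumes "M > 0" and "finite S" and "finite T"
  shows "(monom 1 (nat M) - 1) dvd
    residue_poly M f S * residue_poly M g T - residue_poly M (\<lambda>(x, y). f x + g y) (S \<times> T)"
proof -
  have "residue_poly M f S * residue_poly M g T
      = (\<Sum>(x, y)\<in>S \<times> T. monom 1 (nat (f x mod M) + nat (g y mod M)))"
    unfolding residue_poly_def sum_product sum.cartesian_product by (simp add: mult_monom)
  then have "residue_poly M f S * residue_poly M g T - residue_poly M (\<lambda>(x, y). f x + g y) (S \<times> T)
      = (\<Sum>(x, y)\<in>S \<times> T. monom 1 (nat (f x mod M) + nat (g y mod M))
          - monom 1 ((nat (f x mod M) + nat (g y mod M)) mod nat M))"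
    using assms(1) by (simp add: residue_poly_def sum_subtractf split_def nat_mod_add_nat_mod)
  then show ?thesis
    by (simp add: split_def dvd_sum monom_mod_dvd)
qed

lemma residue_poly_power_cong:
  assumes "M > 0" and "prime L" and "finite S"
  shows "poly_cong (int L) (nat M) (residue_poly M f S ^ L) (residue_poly M (\<lambda>s. int L * f s) S)"
proof -
  obtain R where "residue_poly M f S ^ L = (\<Sum>s\<in>S. monom 1 (nat (f s mod M)) ^ L) + of_nat L * R"
    using frobenius_sum[OF assms(2,3)] unfolding residue_poly_def by blast
  then have "poly_cong (int L) (nat M) (residue_poly M f S ^ L) (\<Sum>s\<in>S. monom 1 (nat (f s mod M) * L))"
    by (intro poly_cong_smultI[where R = R]) (simp add: monom_power of_nat_mult_conv_smult)
  also have "poly_cong (int L) (nat M) \<dots> (residue_poly M (\<lambda>s. int L * f s) S)"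
  proof (rule poly_cong_dvdI)
    have exponent: "(nat (f s mod M) * L) mod nat M = nat ((int L * f s) mod M)" for s
    proof -
      have "nat ((int L * f s) mod M) = nat ((int L * (f s mod M)) mod M)"
        by (simp add: mod_mult_right_eq)
      also have "\<dots> = nat (int L * (f s mod M)) mod nat M"
        using assms(1) by (simp add: nat_mod_distrib)
      also have "nat (int L * (f s mod M)) = nat (f s mod M) * L"
        by (simp add: nat_mult_distrib)
      finally show ?thesis ..
    qed
    then show "(monom 1 (nat M) - 1) dvd
        (\<Sum>s\<in>S. monom 1 (nat (f s mod M) * L)) - residue_poly M (\<lambda>s. int L * f s) S"
      unfolding residue_poly_def by (simp add: sum_subtractf[symmetric] dvd_sum monom_mod_dvd flip: exponent)
  qed
  finally show ?thesis .
qed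

lemma coeff_residue_poly:
  assumes "M > 0" and "finite S"
  shows "coeff (residue_poly M f S) j = int (card {s \<in> S. f s mod M = int j})"
proof -
  have "coeff (residue_poly M f S) j = (\<Sum>s\<in>S. if f s mod M = int j then 1 else 0)"
    unfolding residue_poly_def coeff_sum using assms(1) by (intro sum.cong) auto
  also have "\<dots> = int (card {s \<in> S. f s mod M = int j})"
    using assms(2) by (simp add: sum.inter_filter[symmetric])
  finally show ?thesis .
qed

lemma poly_residue_poly_1: "poly (residue_poly M f S) 1 = int (card S)"
  by (simp add: residue_poly_def poly_sum poly_monom)

lemma residue_poly_bij_eq:
  assumes "bij_betw (\<lambda>s. f s mod M) S (ZM M)"
  shows "residue_poly M f S = (\<Sum>k<nat M. monom 1 k)"
proof -
  have "bij_betw nat (ZM M) {..<nat M}"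
    unfolding ZM_def bij_betw_def inj_on_def
    by (auto simp: image_iff intro!: bexI[of _ "int k" for k])
  then have "(\<Sum>y\<in>ZM M. monom 1 (nat y)) = (\<Sum>k<nat M. monom 1 k :: int poly)"
    by (rule sum.reindex_bij_betw)
  moreover have "residue_poly M f S = (\<Sum>y\<in>ZM M. monom 1 (nat y))"
    unfolding residue_poly_def by (rule sum.reindex_bij_betw[OF assms])
  ultimately show ?thesis
    by simp
qed

lemma residue_poly_image_eq_if_cong:
  fixes M l c :: int
  assumes "M > 0" and "finite S" and "\<not> l dvd c"
    and cong: "poly_cong l (nat M) (residue_poly M f S) (smult c (\<Sum>k<nat M. monom 1 k))"
  shows "(\<lambda>s. f s mod M) ` S = ZM M"
proof
  show "(\<lambda>s. f s mod M) ` S \<subseteq> ZM M"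
    using assms(1) unfolding ZM_def by auto
  show "ZM M \<subseteq> (\<lambda>s. f s mod M) ` S"
  proof
    fix y assume y: "y \<in> ZM M"
    have coeff_ones: "coeff (\<Sum>k<nat M. monom 1 k) j = (if j < nat M then 1 else 0)" for j
      by (simp add: coeff_sum)
    have "l dvd coeff (residue_poly M f S) (nat y) - coeff (smult c (\<Sum>k<nat M. monom 1 k)) (nat y)"
    proof (rule poly_cong_coeff[OF cong])
      show "nat M > 0"
        using assms(1) by simp
      fix j assume "nat M \<le> j"
      then have "f s mod M \<noteq> int j" for s
        using pos_mod_bound[OF assms(1), of "f s"] by linarith
      then have "{s \<in> S. f s mod M = int j} = {}"
        by blast
      then show "coeff (residue_poly M f S) j = coeff (smult c (\<Sum>k<nat M. monom 1 k)) j"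
        using \<open>nat M \<le> j\<close> assms(1,2) by (simp add: coeff_residue_poly coeff_ones)
    qed
    then have "l dvd int (card {s \<in> S. f s mod M = y}) - c"
      using y assms(1,2) unfolding ZM_def by (simp add: coeff_residue_poly coeff_ones)
    then have "card {s \<in> S. f s mod M = y} \<noteq> 0"
      using assms(3) by (metis diff_0 dvd_minus_iff of_nat_0)
    then show "y \<in> (\<lambda>s. f s mod M) ` S"
      by (auto simp: card_eq_0_iff assms(2))
  qed
qed

section \<open>The theorems of Tijdeman and Sands\<close>

lemma tiling_imp_bij_betw:
  assumes "M > 0" and "tiling M A B"
  shows "bij_betw (\<lambda>(a, b). (a + b) mod M) (A \<times> B) (ZM M)"
proof -
  have uniq: "\<forall>x\<in>ZM M. \<exists>!ab. fst ab \<in> A \<and> snd ab \<in> B \<and> (fst ab + snd ab) mod M = x"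
    using assms(2) unfolding tiling_def by blast
  have mod_in: "w mod M \<in> ZM M" for w
    using assms(1) unfolding ZM_def by simp
  have "ab = ab'" if "ab \<in> A \<times> B" "ab' \<in> A \<times> B"
    and "(fst ab + snd ab) mod M = (fst ab' + snd ab') mod M" for ab ab'
  proof -
    have "\<exists>!ab''. fst ab'' \<in> A \<and> snd ab'' \<in> B \<and> (fst ab'' + snd ab'') mod M = (fst ab + snd ab) mod M"
      using uniq mod_in by blast
    then show ?thesis
      using that by (metis mem_Times_iff)
  qed
  then have "inj_on (\<lambda>(a, b). (a + b) mod M) (A \<times> B)"
    by (intro inj_onI) (simp add: split_beta)
  moreover have "(\<lambda>(a, b). (a + b) mod M) ` (A \<times> B) = ZM M"
  proof
    show "(\<lambda>(a, b). (a + b) mod M) ` (A \<times> B) \<subseteq> ZM M"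
      using mod_in by auto
    show "ZM M \<subseteq> (\<lambda>(a, b). (a + b) mod M) ` (A \<times> B)"
    proof
      fix x assume "x \<in> ZM M"
      then obtain ab where "fst ab \<in> A" "snd ab \<in> B" "(fst ab + snd ab) mod M = x"
        using uniq by blast
      then show "x \<in> (\<lambda>(a, b). (a + b) mod M) ` (A \<times> B)"
        by (intro rev_image_eqI[of ab]) (auto simp: split_beta mem_Times_iff)
    qed
  qed
  ultimately show ?thesis
    unfolding bij_betw_def ..
qed

lemma dilated_residue_poly_cong:
  fixes M l s :: int
  assumes "M > 0" and "A \<subseteq> ZM M" and "finite B" and "prime l"
    and tiles: "bij_betw (\<lambda>(a, b). (a + s * b) mod M) (A \<times> B) (ZM M)"
  shows "poly_cong l (nat M) (residue_poly M (\<lambda>(a, b). a + (l * s) * b) (A \<times> B))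
    (smult (int (card B) ^ (nat l - 1)) (\<Sum>k<nat M. monom 1 k))"
proof -
  define m L where "m = nat M" and "L = nat l"
  have "l = int L" "prime L" "L > 0"
    using assms(4) prime_gt_0_int[OF assms(4)] by (auto simp: L_def prime_nat_iff_prime)
  have "finite A"
    using assms(2) finite_subset unfolding ZM_def by auto
  define PA where "PA = residue_poly M id A"
  define PB where "PB t = residue_poly M (\<lambda>b. t * b) B" for t
  define C where "C t = residue_poly M (\<lambda>(a, b). a + t * b) (A \<times> B)" for t
  have C_cong: "poly_cong l m (PA * PB t) (C t)" for t
    unfolding PA_def PB_def C_def m_def
    using residue_poly_mult[OF assms(1) \<open>finite A\<close> assms(3), of id "\<lambda>b. t * b"]
    by (intro poly_cong_dvdI) (simp add: split_def)
  have C_tiles: "C s = (\<Sum>k<m. monom 1 k)"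
    unfolding C_def m_def using tiles by (intro residue_poly_bij_eq) (simp add: split_def)
  have frobenius: "poly_cong l m (PB s ^ L) (PB (l * s))"
    using residue_poly_power_cong[OF assms(1) \<open>prime L\<close> assms(3), of "\<lambda>b. s * b"]
    unfolding PB_def m_def \<open>l = int L\<close> by (simp only: mult.assoc[symmetric])
  have "poly_cong l m (C (l * s)) (PA * PB (l * s))"
    by (rule poly_cong_sym[OF C_cong])
  also have "poly_cong l m (PA * PB (l * s)) (PA * PB s ^ L)"
    by (rule poly_cong_mult_left[OF poly_cong_sym[OF frobenius]])
  also have "PA * PB s ^ L = (PA * PB s) * PB s ^ (L - 1)"
    using \<open>L > 0\<close> by (simp add: power_eq_if)
  also have "poly_cong l m \<dots> (C s * PB s ^ (L - 1))"
    using C_cong by (rule poly_cong_mult_right)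
  also have "C s * PB s ^ (L - 1) = (\<Sum>k<m. monom 1 k) * PB s ^ (L - 1)"
    using C_tiles by simp
  also have "poly_cong l m \<dots> (smult (int (card B) ^ (L - 1)) (\<Sum>k<m. monom 1 k))"
    using sum_monom_mult_dvd[of m "PB s ^ (L - 1)"]
    unfolding PB_def by (intro poly_cong_dvdI) (simp add: poly_residue_poly_1 poly_power)
  finally show ?thesis
    unfolding C_def m_def L_def .
qed

lemma dilated_tiling_prime_mult:
  fixes M l s :: int
  assumes "M > 0" and "A \<subseteq> ZM M" and "finite B" and "prime l" and "coprime l M"
    and tiles: "bij_betw (\<lambda>(a, b). (a + s * b) mod M) (A \<times> B) (ZM M)"
  shows "bij_betw (\<lambda>(a, b). (a + (l * s) * b) mod M) (A \<times> B) (ZM M)"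
proof -
  have "finite (A \<times> B)"
    using assms(2,3) finite_subset unfolding ZM_def by auto
  have card_AB: "card (A \<times> B) = card (ZM M)"
    using bij_betw_same_card[OF tiles] .
  have "\<not> l dvd int (card B) ^ (nat l - 1)"
  proof
    assume "l dvd int (card B) ^ (nat l - 1)"
    then have "l dvd int (card B)"
      using assms(4) prime_dvd_power by blast
    then have "l dvd int (card (ZM M))"
      by (simp flip: card_AB add: card_cartesian_product)
    then have "l dvd M"
      using assms(1) unfolding ZM_def by simp
    then show False
      using assms(4,5) by (meson coprime_common_divisor dvd_refl not_prime_unit)
  qed
  then have "(\<lambda>(a, b). (a + (l * s) * b) mod M) ` (A \<times> B) = ZM M"
    using residue_poly_image_eq_if_cong[OF assms(1) \<open>finite (A \<times> B)\<close> _
        dilated_residue_poly_cong[OF assms(1-4) tiles]]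
    by (simp add: split_def)
  moreover from this have "inj_on (\<lambda>(a, b). (a + (l * s) * b) mod M) (A \<times> B)"
    using card_AB \<open>finite (A \<times> B)\<close> by (simp add: inj_on_iff_eq_card)
  ultimately show ?thesis
    unfolding bij_betw_def by blast
qed

lemma tiling_dilation_pos:
  fixes M t :: int
  assumes "M > 0" and "tiling M A B" and "t \<ge> 1" and "coprime t M"
  shows "bij_betw (\<lambda>(a, b). (a + t * b) mod M) (A \<times> B) (ZM M)"
  using assms(3,4)
proof (induction "nat t" arbitrary: t rule: less_induct)
  case less
  show ?case
  proof (cases "t = 1")
    case True
    then show ?thesis
      using tiling_imp_bij_betw[OF assms(1,2)] by simp
  next
    case False
    then obtain l where "prime l" "l dvd t"
      using prime_divisor_exists[of t] less.prems(1) by auto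
    then obtain t' where t': "t = l * t'"
      by blast
    have "l > 1"
      using \<open>prime l\<close> prime_gt_1_int by blast
    then have "t' > 0"
      using zero_less_mult_pos[of l t'] less.prems(1) t' by simp
    moreover have "1 * t' < l * t'"
      using \<open>l > 1\<close> \<open>t' > 0\<close> by (rule mult_strict_right_mono)
    ultimately have "bij_betw (\<lambda>(a, b). (a + t' * b) mod M) (A \<times> B) (ZM M)"
      using less.hyps less.prems(2) t' by simp
    moreover have "A \<subseteq> ZM M" and "finite B"
      using assms(2) finite_subset unfolding tiling_def ZM_def by auto
    moreover have "coprime l M"
      using less.prems(2) t' by simp
    ultimately show ?thesis
      unfolding t' using dilated_tiling_prime_mult[OF assms(1) _ _ \<open>prime l\<close>] by blast
  qed
qed

theorem tiling_dilation:
  fixes M s :: int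
  assumes "M > 0" and "tiling M A B" and "coprime s M"
  shows "bij_betw (\<lambda>(a, b). (a + s * b) mod M) (A \<times> B) (ZM M)"
proof -
  define t where "t = s mod M + M" \<comment> \<open>positive even when M = 1\<close>
  have "[t = s] (mod M)"
    unfolding t_def cong_def by simp
  then have "coprime t M"
    using assms(3) cong_imp_coprime cong_sym by blast
  moreover have "t \<ge> 1"
    using pos_mod_sign[OF assms(1), of s] assms(1) unfolding t_def by linarith
  ultimately have "bij_betw (\<lambda>(a, b). (a + t * b) mod M) (A \<times> B) (ZM M)"
    using tiling_dilation_pos[OF assms(1,2)] by blast
  moreover have "(a + t * b) mod M = (a + s * b) mod M" for a b
    using \<open>[t = s] (mod M)\<close> unfolding cong_def by (metis mod_add_right_eq mod_mult_left_eq)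
  ultimately show ?thesis
    by (simp add: split_def)
qed

lemma tiling_dilation_cong_imp_eq:
  fixes M r :: int
  assumes "M > 0" and "tiling M A B" and "coprime r M"
    and "a \<in> A" "a' \<in> A" "b \<in> B" "b' \<in> B" and "[a + r * b = a' + r * b'] (mod M)"
  shows "a = a'" and "b = b'"
proof -
  have inj: "inj_on (\<lambda>(a, b). (a + r * b) mod M) (A \<times> B)"
    using bij_betw_imp_inj_on[OF tiling_dilation[OF assms(1-3)]] .
  have "(a, b) = (a', b')"
    by (rule inj_onD[OF inj]) (use assms(4-8) in \<open>simp_all add: cong_def\<close>)
  then show "a = a'" and "b = b'"
    by simp_all
qed

theorem tiling_gcd_diff_eq_imp_eq:
  fixes M :: int
  assumes "M > 0" and "tiling M A B"
    and "a \<in> A" "a' \<in> A" "b \<in> B" "b' \<in> B" and "gcd (a - a') M = gcd (b - b') M"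
  shows "a = a'"
proof -
  obtain s where "coprime s M" and "M dvd (a - a') - s * (b - b')"
    using gcd_eq_imp_unit_multiple[of M M "b - b'" "a - a'"] assms(1,7) by auto
  then have "[a + s * b' = a' + s * b] (mod M)"
    by (simp add: cong_iff_dvd_diff algebra_simps)
  then show ?thesis
    by (rule tiling_dilation_cong_imp_eq(1)[OF assms(1,2) \<open>coprime s M\<close> assms(3,4,6,5)])
qed

lemma tiling_rep:
  assumes "M > 0" and "tiling M A B" and "y \<in> ZM M"
  defines "rep \<equiv> inv_into (A \<times> B) (\<lambda>(a, b). (a + b) mod M)"
  shows "rep y \<in> A \<times> B" and "[fst (rep y) + snd (rep y) = y] (mod M)"
proof -
  have bij: "bij_betw (\<lambda>(a, b). (a + b) mod M) (A \<times> B) (ZM M)"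
    using tiling_imp_bij_betw[OF assms(1,2)] .
  then show "rep y \<in> A \<times> B"
    unfolding rep_def using assms(3) by (metis bij_betwE bij_betw_inv_into)
  have "(\<lambda>(a, b). (a + b) mod M) (rep y) = y"
    using bij assms(3) unfolding rep_def bij_betw_def by (simp add: f_inv_into_f)
  moreover have "y mod M = y"
    using assms(3) unfolding ZM_def by simp
  ultimately show "[fst (rep y) + snd (rep y) = y] (mod M)"
    unfolding cong_def by (simp add: split_beta)
qed

lemma bij_betw_shift_ZM:
  fixes M t :: int
  assumes "M > 0"
  shows "bij_betw (\<lambda>y. (y + t) mod M) (ZM M) (ZM M)"
proof -
  have maps: "(\<lambda>y. (y + t) mod M) ` ZM M \<subseteq> ZM M"
    using assms unfolding ZM_def by auto
  have "inj_on (\<lambda>y. (y + t) mod M) (ZM M)"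
  proof (rule inj_onI)
    fix y y' assume "y \<in> ZM M" "y' \<in> ZM M" and eq: "(y + t) mod M = (y' + t) mod M"
    have "[y + t = y' + t] (mod M)"
      using eq unfolding cong_def .
    then have "[y = y'] (mod M)"
      by (simp only: cong_add_rcancel)
    then show "y = y'"
      using \<open>y \<in> ZM M\<close> \<open>y' \<in> ZM M\<close> unfolding ZM_def by (auto intro: cong_less_imp_eq_int)
  qed
  moreover have "finite (ZM M)"
    unfolding ZM_def by simp
  ultimately show ?thesis
    using maps endo_inj_surj unfolding bij_betw_def by blast
qed

section \<open>Roots of unity\<close>

lemma cis_2pi_ratio_eq_1_iff:
  fixes q t :: int
  assumes "q > 0"
  shows "cis (2 * pi * of_int t / of_int q) = 1 \<longleftrightarrow> q dvd t"
proof
  assume "cis (2 * pi * of_int t / of_int q) = 1"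
  then obtain j :: int where "2 * pi * of_int t / of_int q = of_int j * (2 * pi)"
    by (auto simp: cis_eq_1_iff)
  then have "of_int t = (of_int (j * q) :: real)"
    using assms by (simp add: field_simps)
  then show "q dvd t"
    by (simp only: of_int_eq_iff) simp
next
  assume "q dvd t"
  then obtain j where "t = q * j"
    by blast
  then show "cis (2 * pi * of_int t / of_int q) = 1"
    using assms by (simp add: cis_eq_1_iff)
qed

lemma prod_linear_factors_dvd:
  fixes P :: "'a::idom poly"
  assumes "finite K" and "inj_on \<zeta> K" and "\<And>k. k \<in> K \<Longrightarrow> poly P (\<zeta> k) = 0"
  shows "(\<Prod>k\<in>K. [:- \<zeta> k, 1:]) dvd P"
  using assms
proof (induction K arbitrary: P rule: finite_induct)
  case empty
  then show ?case
    by simp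
next
  case (insert k K)
  obtain P' where P': "P = [:- \<zeta> k, 1:] * P'"
    using insert.prems(2) poly_eq_0_iff_dvd by blast
  have "poly P' (\<zeta> k') = 0" if "k' \<in> K" for k'
  proof -
    have "\<zeta> k \<notin> \<zeta> ` K"
      using insert.prems(1) insert.hyps(2) by (simp add: inj_on_insert)
    then have "\<zeta> k' \<noteq> \<zeta> k"
      using that by (metis image_eqI)
    then show ?thesis
      using insert.prems(2)[of k'] that P' by simp
  qed
  then have "(\<Prod>k\<in>K. [:- \<zeta> k, 1:]) dvd P'"
    using insert.IH insert.prems(1) by (simp add: inj_on_insert)
  then show ?case
    unfolding P' prod.insert[OF insert.hyps] by (rule mult_dvd_mono[OF dvd_refl])
qed

lemma cyclotomic_dvdI:
  assumes "Q > 0" and "\<And>k. k < Q \<Longrightarrow> coprime k Q \<Longrightarrow> poly P (cis (2 * pi * real k / real Q)) = 0"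
  shows "cyclotomic Q dvd P"
  unfolding cyclotomic_def
proof (rule prod_linear_factors_dvd)
  show "inj_on (\<lambda>k. cis (2 * pi * real k / real Q)) {k. k < Q \<and> coprime k Q}"
  proof (rule inj_onI)
    fix k1 k2 assume k: "k1 \<in> {k. k < Q \<and> coprime k Q}" "k2 \<in> {k. k < Q \<and> coprime k Q}"
      and eq: "cis (2 * pi * real k1 / real Q) = cis (2 * pi * real k2 / real Q)"
    have "cis (2 * pi * real k1 / real Q - 2 * pi * real k2 / real Q) = 1"
      using eq by (simp add: cis_divide[symmetric])
    also have "2 * pi * real k1 / real Q - 2 * pi * real k2 / real Q
        = 2 * pi * of_int (int k1 - int k2) / of_int (int Q)"
      by (simp add: diff_divide_distrib right_diff_distrib)
    finally have "int Q dvd int k1 - int k2"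
      using assms(1) by (simp only: cis_2pi_ratio_eq_1_iff of_nat_0_less_iff)
    show "k1 = k2"
    proof (rule ccontr)
      assume "k1 \<noteq> k2"
      then have "\<bar>int Q\<bar> \<le> \<bar>int k1 - int k2\<bar>"
        using \<open>int Q dvd int k1 - int k2\<close> by (intro dvd_imp_le_int) simp_all
      then show False
        using k by auto
    qed
  qed
qed (use assms(2) in auto)

lemma poly_mask_poly_cis:
  assumes "\<And>a. a \<in> A \<Longrightarrow> 0 \<le> a"
  shows "poly (mask_poly A) (cis \<theta>) = (\<Sum>a\<in>A. cis (of_int a * \<theta>))"
  unfolding mask_poly_def poly_sum poly_monom DeMoivre using assms by (intro sum.cong) simp_all

section \<open>Fibers\<close>

locale prime_fibers =
  fixes M p :: int and n :: nat
  assumes M_pos: "M > 0" and prime_p: "prime p" and p_dvd_M: "p dvd M"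
    and n_def: "n = multiplicity p M"
begin

abbreviation q where "q \<equiv> p ^ n"
abbreviation h where "h \<equiv> M div p"

lemma p_gt_1: "p > 1"
  using prime_p prime_gt_1_int by blast

lemma p_not_unit: "\<not> is_unit p"
  using prime_p not_prime_unit by blast

lemma M_eq: "M = p * h"
  using p_dvd_M by simp

lemma h_pos: "h > 0"
  using p_dvd_M M_pos p_gt_1 by (simp add: pos_imp_zdiv_pos_iff zdvd_imp_le)

lemma h_dvd_M: "h dvd M"
  using M_eq by (metis dvd_triv_right)

lemma q_dvd_M: "q dvd M"
  using multiplicity_dvd[of p M] n_def by simp

lemma not_pq_dvd_M: "\<not> p * q dvd M"
proof
  assume "p * q dvd M"
  then have "p ^ Suc n dvd M"
    by simp
  then have "Suc n \<le> multiplicity p M"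
    using power_dvd_iff_le_multiplicity[of M p "Suc n"] M_pos p_not_unit by simp
  then show False
    using n_def by simp
qed

lemma n_pos: "n \<ge> 1"
  using p_dvd_M n_def power_dvd_iff_le_multiplicity[of M p 1] M_pos p_not_unit by simp

lemma p_dvd_q: "p dvd q"
  using le_imp_power_dvd[OF n_pos, of p] by simp

lemma pn1_dvd_h: "p ^ (n - 1) dvd h"
proof -
  have "p * p ^ (n - 1) dvd p * h"
    using q_dvd_M n_pos M_eq by (simp flip: power_Suc)
  then show ?thesis
    using p_gt_1 by simp
qed

lemma not_q_dvd_h: "\<not> q dvd h"
  using not_pq_dvd_M M_eq by (metis mult_dvd_mono dvd_refl)

lemma dvd_h_if_not_q_dvd:
  assumes "m dvd M" and "\<not> q dvd m"
  shows "m dvd h"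
proof -
  have "m \<noteq> 0"
    using assms(1) M_pos by auto
  have "m * p dvd M"
  proof (rule multiplicity_le_imp_dvd)
    show "m * p \<noteq> 0"
      using \<open>m \<noteq> 0\<close> p_gt_1 by simp
    fix l :: int assume "prime l"
    show "multiplicity l (m * p) \<le> multiplicity l M"
    proof (cases "l = p")
      case True
      have "multiplicity p m < n"
        using assms(2) \<open>m \<noteq> 0\<close> p_not_unit by (intro multiplicity_lessI)
      moreover have "multiplicity p (m * p) = multiplicity p m + 1"
        using prime_elem_multiplicity_mult_distrib[of p m p] \<open>m \<noteq> 0\<close> p_gt_1 prime_p by simp
      ultimately show ?thesis
        using True n_def by simp
    next
      case False
      have "multiplicity l (m * p) = multiplicity l m + multiplicity l p"
        using \<open>prime l\<close> \<open>m \<noteq> 0\<close> p_gt_1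
        by (intro prime_elem_multiplicity_mult_distrib) auto
      also have "multiplicity l p = 0"
        using False \<open>prime l\<close> prime_p by (simp add: prime_multiplicity_other)
      finally have "multiplicity l (m * p) = multiplicity l m"
        by simp
      then show ?thesis
        using assms(1) M_pos dvd_imp_multiplicity_le by auto
    qed
  qed
  then have "p * m dvd p * h"
    using M_eq by (simp add: mult.commute)
  then show ?thesis
    using p_gt_1 by simp
qed

lemma gcd_h_eq: "gcd x h = gcd (gcd x M) h"
  using h_dvd_M h_pos by (simp add: gcd.assoc)

lemma gcd_h_if_not_q_dvd:
  assumes "\<not> q dvd gcd x M"
  shows "gcd x h = gcd x M"
  using dvd_h_if_not_q_dvd[OF gcd_dvd2 assms] gcd_h_eq[of x] by simp

lemma gcd_h_if_q_dvd:
  assumes "q dvd gcd x M"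
  shows "p * gcd x h = gcd x M"
proof -
  define G where "G = gcd x M"
  have "G > 0"
    using M_pos unfolding G_def by simp
  have "p * gcd x h = p * gcd G h"
    using gcd_h_eq unfolding G_def by simp
  also have "\<dots> = gcd (p * G) (p * h)"
    using p_gt_1 by (simp add: gcd_mult_left abs_mult)
  finally have "p * gcd x h = gcd (p * G) M"
    using M_eq by simp
  moreover have "gcd (p * G) M = G"
  proof -
    have "gcd (p * G) M = G \<or> gcd (p * G) M = p * G"
      using \<open>G > 0\<close> M_pos prime_p by (intro dvd_prime_mult_cases) (simp_all add: G_def)
    moreover have "\<not> p * G dvd M"
      using assms not_pq_dvd_M unfolding G_def by (meson dvd_trans mult_dvd_mono dvd_refl)
    ultimately show ?thesis
      by (metis gcd_dvd2)
  qed
  ultimately show ?thesis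
    unfolding G_def by simp
qed

lemma dvd_M_if_q_dvd_h_dvd:
  assumes "q dvd y" and "h dvd y"
  shows "M dvd y"
proof -
  have "gcd y h = h"
    using assms(2) h_pos by (simp add: gcd_proj2_if_dvd)
  moreover have "p * gcd y h = gcd y M"
    using assms(1) q_dvd_M by (intro gcd_h_if_q_dvd) simp
  ultimately have "gcd y M = M"
    using M_eq by simp
  then show ?thesis
    by (metis gcd_dvd1)
qed

lemma cong_M_iff_cong_q_h: "[x = y] (mod M) \<longleftrightarrow> [x = y] (mod q) \<and> [x = y] (mod h)"
  using dvd_M_if_q_dvd_h_dvd q_dvd_M h_dvd_M cong_dvd_modulus by (auto simp: cong_iff_dvd_diff)

lemma mem_fiber_iff: "y \<in> fiber M p x \<longleftrightarrow> y \<in> ZM M \<and> [y = x] (mod h)"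
proof
  assume "y \<in> fiber M p x"
  then obtain k where y: "y = (x + k * h) mod M"
    unfolding fiber_def fiber_set_def by blast
  have "[y = x + k * h] (mod h)"
    unfolding y by (rule cong_dvd_modulus[OF _ h_dvd_M]) simp
  also have "[x + k * h = x] (mod h)"
    by (simp add: cong_iff_dvd_diff)
  finally show "y \<in> ZM M \<and> [y = x] (mod h)"
    using M_pos unfolding y ZM_def by simp
next
  assume y: "y \<in> ZM M \<and> [y = x] (mod h)"
  then obtain t where t: "y = x + h * t"
    by (metis cong_iff_lin cong_sym)
  define k where "k = t mod p"
  have "h * t = h * (k + p * (t div p))"
    unfolding k_def by simp
  also have "\<dots> = k * h + (t div p) * (p * h)"
    by (simp add: algebra_simps)
  also have "p * h = M"
    by (rule M_eq[symmetric])
  finally have "y = (x + k * h) + (t div p) * M"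
    using t by simp
  then have "y mod M = (x + k * h) mod M"
    by simp
  moreover have "y mod M = y"
    using y unfolding ZM_def by simp
  ultimately have "y = (x + k * h) mod M"
    by simp
  moreover have "0 \<le> k" "k < p"
    unfolding k_def using p_gt_1 by simp_all
  ultimately show "y \<in> fiber M p x"
    unfolding fiber_def fiber_set_def by blast
qed

lemma mod_mem_fiber_iff: "w mod M \<in> fiber M p z \<longleftrightarrow> [w = z] (mod h)"
proof -
  have "[w mod M = w] (mod h)"
    by (rule cong_dvd_modulus[OF _ h_dvd_M]) simp
  then have "[w mod M = z] (mod h) \<longleftrightarrow> [w = z] (mod h)"
    by (metis cong_sym cong_trans)
  then show ?thesis
    using M_pos unfolding mem_fiber_iff ZM_def by simp
qed

end

locale prime_fibers_tiling = prime_fibers +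
  fixes A B :: "int set"
  assumes tiling: "tiling M A B"
begin

lemma A_subset: "A \<subseteq> ZM M"
  using tiling unfolding tiling_def by blast

lemma finite_B: "finite B"
  using tiling finite_subset unfolding tiling_def ZM_def by blast

lemma tiling_B_nonempty: "B \<noteq> {}"
  using tiling M_pos unfolding tiling_def ZM_def by fastforce

definition fiber_B_cong :: bool where
  "fiber_B_cong \<longleftrightarrow> (\<forall>a\<in>A. \<forall>a'\<in>A. \<forall>b\<in>B. \<forall>b'\<in>B. \<forall>r. coprime r M \<longrightarrow>
      [a + r * b = a' + r * b'] (mod h) \<longrightarrow> [b = b'] (mod q))"

lemma fiber_B_congD:
  assumes "fiber_B_cong" and "a \<in> A" "a' \<in> A" "b \<in> B" "b' \<in> B" and "coprime r M"
    and "[a + r * b = a' + r * b'] (mod h)"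
  shows "[b = b'] (mod q)"
  using assms unfolding fiber_B_cong_def by blast

lemma coprime_q_if_coprime_M: "coprime r M \<Longrightarrow> coprime r q"
  using coprime_divisors[OF dvd_refl q_dvd_M] by blast

lemma mem_Sigma_dil_iff:
  "c \<in> Sigma_set M (dil M r B) A (fiber M p z) \<longleftrightarrow>
    (\<exists>b\<in>B. c = (r * b) mod M \<and> (\<exists>a\<in>A. [a + r * b = z] (mod h)))"
proof -
  have "(c + a) mod M \<in> fiber M p z \<longleftrightarrow> [a + r * b = z] (mod h)" if "c = (r * b) mod M" for a b
  proof -
    have "(c + a) mod M = (a + r * b) mod M"
      using that by (simp add: mod_add_left_eq mod_add_right_eq add.commute)
    then show ?thesis
      by (simp add: mod_mem_fiber_iff)
  qed
  then show ?thesis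
    unfolding Sigma_set_def dil_def by blast
qed

lemma mem_Sigma_A_iff:
  "a \<in> Sigma_set M A (dil M r B) (fiber M p z) \<longleftrightarrow> a \<in> A \<and> (\<exists>b\<in>B. [a + r * b = z] (mod h))"
proof -
  have "(a + c) mod M \<in> fiber M p z \<longleftrightarrow> [a + r * b = z] (mod h)" if "c = (r * b) mod M" for b c
  proof -
    have "(a + c) mod M = (a + r * b) mod M"
      using that by (simp add: mod_add_right_eq)
    then show ?thesis
      by (simp add: mod_mem_fiber_iff)
  qed
  then show ?thesis
    unfolding Sigma_set_def dil_def by blast
qed

lemma fiber_B_cong_Sigma_dil_cong:
  assumes "fiber_B_cong" and "coprime r M"
    and "c \<in> Sigma_set M (dil M r B) A (fiber M p z)" "c' \<in> Sigma_set M (dil M r B) A (fiber M p z)"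
  shows "[c = c'] (mod q)"
proof -
  obtain a a' b b' where "a \<in> A" "a' \<in> A" "b \<in> B" "b' \<in> B"
    and c: "c = (r * b) mod M" "c' = (r * b') mod M"
    and z: "[a + r * b = z] (mod h)" "[a' + r * b' = z] (mod h)"
    using assms(3,4) unfolding mem_Sigma_dil_iff by blast
  have "[b = b'] (mod q)"
    using fiber_B_congD[OF assms(1) \<open>a \<in> A\<close> \<open>a' \<in> A\<close> \<open>b \<in> B\<close> \<open>b' \<in> B\<close> assms(2)]
      cong_trans[OF z(1) cong_sym[OF z(2)]] by blast
  have "[c = r * b] (mod q)"
    unfolding c by (rule cong_mod_dvd_modulus[OF q_dvd_M])
  also have "[r * b = r * b'] (mod q)"
    using \<open>[b = b'] (mod q)\<close> by (rule cong_scalar_left)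
  also have "[r * b' = c'] (mod q)"
    unfolding c by (rule cong_sym[OF cong_mod_dvd_modulus[OF q_dvd_M]])
  finally show ?thesis .
qed

lemma fiber_B_cong_Sigma_A_parity:
  assumes "fiber_B_cong" and "coprime r M"
    and "a \<in> Sigma_set M A (dil M r B) (fiber M p z)" "a' \<in> Sigma_set M A (dil M r B) (fiber M p z)"
    and "a \<noteq> a'"
  shows "p ^ (n - 1) dvd a - a'" and "\<not> p ^ n dvd a - a'"
proof -
  obtain b b' where "a \<in> A" "a' \<in> A" "b \<in> B" "b' \<in> B"
    and z: "[a + r * b = z] (mod h)" "[a' + r * b' = z] (mod h)"
    using assms(3,4) unfolding mem_Sigma_A_iff by blast
  have cong_h: "[a + r * b = a' + r * b'] (mod h)"
    using cong_trans[OF z(1) cong_sym[OF z(2)]] .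
  then have "[b = b'] (mod q)"
    using fiber_B_congD[OF assms(1) \<open>a \<in> A\<close> \<open>a' \<in> A\<close> \<open>b \<in> B\<close> \<open>b' \<in> B\<close> assms(2)] by blast
  then have cong_rb: "[r * b = r * b'] (mod q)"
    by (rule cong_scalar_left)
  have "p ^ (n - 1) dvd q"
    by (simp add: le_imp_power_dvd)
  then have "[(a + r * b) - r * b = (a' + r * b') - r * b'] (mod p ^ (n - 1))"
    using cong_dvd_modulus[OF cong_h pn1_dvd_h] cong_dvd_modulus[OF cong_rb] by (intro cong_diff)
  then show "p ^ (n - 1) dvd a - a'"
    by (simp add: cong_iff_dvd_diff)
  show "\<not> p ^ n dvd a - a'"
  proof
    assume "p ^ n dvd a - a'"
    then have "[a + r * b = a' + r * b'] (mod q)"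
      using cong_rb by (intro cong_add) (simp_all add: cong_iff_dvd_diff)
    then have "[a + r * b = a' + r * b'] (mod M)"
      using cong_h cong_M_iff_cong_q_h by blast
    then have "a = a'"
      using tiling_dilation_cong_imp_eq(1)[OF M_pos tiling assms(2)]
        \<open>a \<in> A\<close> \<open>a' \<in> A\<close> \<open>b \<in> B\<close> \<open>b' \<in> B\<close> by blast
    then show False
      using \<open>a \<noteq> a'\<close> by blast
  qed
qed

lemma fiber_B_cong_imp_splits_parity:
  assumes "fiber_B_cong" and "coprime r M"
  shows "splits_parity M p n (dil M r B) A (fiber M p z)"
  using fiber_B_cong_Sigma_dil_cong[OF assms] fiber_B_cong_Sigma_A_parity[OF assms]
  unfolding splits_parity_def cong_iff_dvd_diff by blast

lemma splits_parity_imp_fiber_B_cong: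
  assumes splits: "\<forall>r\<in>units_ZM M. \<forall>z\<in>ZM M. splits_parity M p n (dil M r B) A (fiber M p z)"
  shows "fiber_B_cong"
  unfolding fiber_B_cong_def
proof (intro ballI allI impI)
  fix a a' b b' r
  assume "a \<in> A" "a' \<in> A" "b \<in> B" "b' \<in> B" "coprime r M"
    and cong_h: "[a + r * b = a' + r * b'] (mod h)"
  define z where "z = (a + r * b) mod M"
  have "r mod M \<in> units_ZM M" "z \<in> ZM M"
    using \<open>coprime r M\<close> M_pos unfolding units_ZM_def ZM_def z_def by simp_all
  moreover have "dil M (r mod M) B = dil M r B"
    unfolding dil_def by (simp add: mod_mult_left_eq)
  ultimately have split: "splits_parity M p n (dil M r B) A (fiber M p z)"
    using splits by metis
  have "[a + r * b = z] (mod h)"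
    unfolding z_def by (rule cong_sym[OF cong_mod_dvd_modulus[OF h_dvd_M]])
  then have "(r * b) mod M \<in> Sigma_set M (dil M r B) A (fiber M p z)"
    unfolding mem_Sigma_dil_iff using \<open>a \<in> A\<close> \<open>b \<in> B\<close> by blast
  moreover have "[a' + r * b' = z] (mod h)"
    using cong_h \<open>[a + r * b = z] (mod h)\<close> by (metis cong_sym cong_trans)
  then have "(r * b') mod M \<in> Sigma_set M (dil M r B) A (fiber M p z)"
    unfolding mem_Sigma_dil_iff using \<open>a' \<in> A\<close> \<open>b' \<in> B\<close> by blast
  ultimately have "[(r * b) mod M = (r * b') mod M] (mod q)"
    using split unfolding splits_parity_def by (simp add: cong_iff_dvd_diff)
  then have "[r * b = r * b'] (mod q)"
    using cong_mod_dvd_modulus[OF q_dvd_M] by (metis cong_sym cong_trans)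
  then show "[b = b'] (mod q)"
    using coprime_q_if_coprime_M[OF \<open>coprime r M\<close>] by (simp add: cong_mult_lcancel)
qed

lemma uniform_splitting_iff_fiber_B_cong:
  "(\<forall>r\<in>units_ZM M. \<forall>z\<in>ZM M. splits_parity M p n (dil M r B) A (fiber M p z)) \<longleftrightarrow> fiber_B_cong"
  using splits_parity_imp_fiber_B_cong fiber_B_cong_imp_splits_parity
  unfolding units_ZM_def by blast

lemma A_xy_subset_imp_fiber_B_cong:
  assumes subset: "\<forall>a\<in>A. \<forall>b\<in>B. \<forall>x\<in>fiber M p a. A_xy M A B x b \<subseteq> Pi_plane M x q"
  shows "fiber_B_cong"
  unfolding fiber_B_cong_def
proof (intro ballI allI impI)
  fix a a' b b' r
  assume "a \<in> A" "a' \<in> A" "b \<in> B" "b' \<in> B" "coprime r M"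
    and cong_h: "[a + r * b = a' + r * b'] (mod h)"
  define x where "x = (a' - r * (b - b')) mod M"
  have "[a' - r * (b - b') = (a + r * b) - r * b] (mod h)"
    using cong_diff[OF cong_sym[OF cong_h] cong_refl[of "r * b"]] by (simp add: algebra_simps)
  then have "x \<in> fiber M p a"
    unfolding x_def mod_mem_fiber_iff by simp
  have "[x = a' - r * (b - b')] (mod M)"
    unfolding x_def by simp
  then have "[x - a' = (a' - r * (b - b')) - a'] (mod M)"
    by (rule cong_diff) (rule cong_refl)
  then have x_cong: "[x - a' = - r * (b - b')] (mod M)"
    by simp
  then have "gcd (x - a') M = gcd (b - b') M"
    using \<open>coprime r M\<close> by (simp add: cong_gcd_eq gcd_mult_left_left_cancel coprime_commute)
  then have "a' \<in> A_xy M A B x b"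
    unfolding A_xy_def using \<open>a' \<in> A\<close> \<open>b' \<in> B\<close> by blast
  then have "q dvd x - a'"
    using subset \<open>a \<in> A\<close> \<open>b \<in> B\<close> \<open>x \<in> fiber M p a\<close> unfolding Pi_plane_def by blast
  moreover have "q dvd (x - a') + r * (b - b')"
    using cong_dvd_modulus[OF x_cong q_dvd_M] by (simp add: cong_iff_dvd_diff)
  ultimately have "q dvd r * (b - b')"
    by (simp add: dvd_add_right_iff)
  then show "[b = b'] (mod q)"
    using coprime_q_if_coprime_M[OF \<open>coprime r M\<close>]
    by (simp add: cong_iff_dvd_diff coprime_dvd_mult_right_iff coprime_commute)
qed

lemma fiber_B_cong_imp_A_xy_subset:
  assumes "fiber_B_cong" and "a \<in> A" "b \<in> B" "x \<in> fiber M p a"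
  shows "A_xy M A B x b \<subseteq> Pi_plane M x q"
proof
  fix y assume "y \<in> A_xy M A B x b"
  then obtain b' where "y \<in> A" "b' \<in> B" and "gcd (x - y) M = gcd (b - b') M"
    unfolding A_xy_def by blast
  then obtain s where "coprime s M" and M_dvd: "M dvd (x - y) - s * (b - b')"
    using gcd_eq_imp_unit_multiple[of M M "b - b'" "x - y"] M_pos by auto
  have "h dvd a - x"
    using assms(4) unfolding mem_fiber_iff by (simp add: cong_iff_dvd_diff dvd_diff_commute)
  moreover have "h dvd (x - y) - s * (b - b')"
    using M_dvd h_dvd_M by (rule dvd_trans[rotated])
  ultimately have "h dvd ((x - y) - s * (b - b')) + (a - x)"
    by (rule dvd_add[rotated])
  also have "(x - y) - s * (b - b') + (a - x) = (a + (- s) * b) - (y + (- s) * b')"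
    by (simp add: algebra_simps)
  finally have "h dvd (a + (- s) * b) - (y + (- s) * b')" .
  then have "[a + (- s) * b = y + (- s) * b'] (mod h)"
    by (simp only: cong_iff_dvd_diff)
  moreover have "coprime (- s) M"
    using \<open>coprime s M\<close> by simp
  ultimately have "[b = b'] (mod q)"
    using fiber_B_congD[OF assms(1,2) \<open>y \<in> A\<close> assms(3) \<open>b' \<in> B\<close>] by blast
  then have "q dvd s * (b - b')"
    by (simp add: cong_iff_dvd_diff)
  moreover have "q dvd (x - y) - s * (b - b')"
    using M_dvd q_dvd_M by (rule dvd_trans[rotated])
  ultimately have "q dvd ((x - y) - s * (b - b')) + s * (b - b')"
    by (rule dvd_add[rotated])
  then have "q dvd x - y"
    by simp
  then show "y \<in> Pi_plane M x q"
    using \<open>y \<in> A\<close> A_subset unfolding Pi_plane_def by blast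
qed

lemma A_xy_subset_iff_fiber_B_cong:
  "(\<forall>a\<in>A. \<forall>b\<in>B. \<forall>x\<in>fiber M p a. A_xy M A B x b \<subseteq> Pi_plane M x q) \<longleftrightarrow> fiber_B_cong"
  using A_xy_subset_imp_fiber_B_cong fiber_B_cong_imp_A_xy_subset by blast

lemma gcd_h_eq_if_cong:
  assumes "coprime r M" and "[a + r * b = a' + r * b'] (mod h)"
  shows "gcd (a - a') h = gcd (b - b') h"
proof -
  have "[a - a' = r * (b' - b)] (mod h)"
    using cong_diff[OF assms(2) cong_refl[of "a' + r * b"]] by (simp add: algebra_simps)
  then have "gcd (a - a') h = gcd (r * (b' - b)) h"
    by (rule cong_gcd_eq)
  also have "\<dots> = gcd (b' - b) h"
    using coprime_divisors[OF dvd_refl h_dvd_M assms(1)]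
    by (simp add: gcd_mult_left_left_cancel coprime_commute)
  also have "\<dots> = gcd (b - b') h"
    by (metis gcd_neg1_int minus_diff_eq)
  finally show ?thesis .
qed

lemma Div_condition_imp_fiber_B_cong:
  assumes Div_cond: "\<forall>m. m > 0 \<longrightarrow> q dvd m \<longrightarrow> m dvd M \<longrightarrow> m \<in> Div M A \<longrightarrow> m div p \<notin> Div M B"
  shows "fiber_B_cong"
  unfolding fiber_B_cong_def
proof (intro ballI allI impI)
  fix a a' b b' r
  assume "a \<in> A" "a' \<in> A" "b \<in> B" "b' \<in> B" "coprime r M"
    and cong_h: "[a + r * b = a' + r * b'] (mod h)"
  show "[b = b'] (mod q)"
  proof (rule ccontr)
    assume "\<not> [b = b'] (mod q)"
    define g G where "g = gcd (b - b') M" and "G = gcd (a - a') M"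
    have "\<not> q dvd g"
      using \<open>\<not> [b = b'] (mod q)\<close> unfolding g_def by (meson cong_iff_dvd_diff dvd_trans gcd_dvd1)
    then have gcd_h: "gcd (a - a') h = g"
      using gcd_h_eq_if_cong[OF \<open>coprime r M\<close> cong_h] gcd_h_if_not_q_dvd unfolding g_def by simp
    show False
    proof (cases "q dvd G")
      case False
      then have "G = g"
        using gcd_h gcd_h_if_not_q_dvd unfolding G_def by simp
      then have "a = a'"
        using tiling_gcd_diff_eq_imp_eq[OF M_pos tiling \<open>a \<in> A\<close> \<open>a' \<in> A\<close> \<open>b \<in> B\<close> \<open>b' \<in> B\<close>]
        unfolding G_def g_def by blast
      then have "G = M"
        unfolding G_def using M_pos by simp
      then show False
        using False q_dvd_M by simp
    next
      case True
      then have "p * gcd (a - a') h = G"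
        unfolding G_def by (rule gcd_h_if_q_dvd)
      then have "G = p * g"
        using gcd_h by simp
      moreover have "G > 0" "G dvd M" "G \<in> Div M A"
        unfolding G_def Div_def using M_pos \<open>a \<in> A\<close> \<open>a' \<in> A\<close> by auto
      ultimately have "g \<notin> Div M B"
        using Div_cond True p_gt_1 by auto
      moreover have "g \<in> Div M B"
        unfolding g_def Div_def using \<open>b \<in> B\<close> \<open>b' \<in> B\<close> by blast
      ultimately show False
        by blast
    qed
  qed
qed

lemma fiber_B_cong_imp_Div_condition:
  assumes "fiber_B_cong" and "q dvd m" "m dvd M" "m \<in> Div M A"
  shows "m div p \<notin> Div M B"
proof
  assume "m div p \<in> Div M B"
  then obtain b b' where "b \<in> B" "b' \<in> B" and g: "m div p = gcd (b - b') M"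
    unfolding Div_def by blast
  obtain a a' where "a \<in> A" "a' \<in> A" and m: "m = gcd (a - a') M"
    using assms(4) unfolding Div_def by blast
  define g where "g = m div p"
  have "m = p * g"
    using dvd_trans[OF p_dvd_q assms(2)] unfolding g_def by simp
  have "\<not> q dvd g"
  proof
    assume "q dvd g"
    then have "p * q dvd m"
      using \<open>m = p * g\<close> by simp
    then show False
      using assms(3) not_pq_dvd_M dvd_trans by blast
  qed
  from assms(2) have "p * gcd (a - a') h = m"
    unfolding m by (rule gcd_h_if_q_dvd)
  then have "p * gcd (a - a') h = p * g"
    using \<open>m = p * g\<close> by simp
  then have "gcd (a - a') h = gcd (b - b') h"
    using p_gt_1 gcd_h_if_not_q_dvd[of "b - b'"] \<open>\<not> q dvd g\<close> g by (simp add: g_def)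
  also have "gcd (b - b') h = gcd (b' - b) h"
    by (metis gcd_neg1_int minus_diff_eq)
  finally obtain r where "coprime r M" and "h dvd (a - a') - r * (b' - b)"
    using gcd_eq_imp_unit_multiple[of M h "b' - b" "a - a'"] M_pos h_pos by auto
  then have "[a + r * b = a' + r * b'] (mod h)"
    by (simp add: cong_iff_dvd_diff algebra_simps)
  then have "q dvd b - b'"
    using fiber_B_congD[OF assms(1) \<open>a \<in> A\<close> \<open>a' \<in> A\<close> \<open>b \<in> B\<close> \<open>b' \<in> B\<close> \<open>coprime r M\<close>]
    by (simp add: cong_iff_dvd_diff)
  then have "q dvd g"
    using q_dvd_M g unfolding g_def by simp
  then show False
    using \<open>\<not> q dvd g\<close> by blast
qed

lemma Div_condition_iff_fiber_B_cong:
  "(\<forall>m. m > 0 \<longrightarrow> q dvd m \<longrightarrow> m dvd M \<longrightarrow> m \<in> Div M A \<longrightarrow> m div p \<notin> Div M B)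
    \<longleftrightarrow> fiber_B_cong"
  using Div_condition_imp_fiber_B_cong fiber_B_cong_imp_Div_condition by blast

lemma fiber_B_cong_shift:
  assumes "fiber_B_cong" and "a \<in> A" "a' \<in> A" "b \<in> B" "b' \<in> B"
    and "[a' + b' = a + b + h] (mod M)"
  shows "[a' = a + h] (mod q)"
proof -
  have "[a' + b' = a + b + h] (mod h)"
    using assms(6) h_dvd_M by (rule cong_dvd_modulus)
  also have "[a + b + h = a + b] (mod h)"
    by (simp add: cong_iff_dvd_diff)
  finally have "[b' = b] (mod q)"
    using fiber_B_congD[OF assms(1,3,2,5,4), of 1] by simp
  moreover have "[a' + b' = a + b + h] (mod q)"
    using assms(6) q_dvd_M by (rule cong_dvd_modulus)
  ultimately have "[(a' + b') - b' = (a + b + h) - b] (mod q)"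
    by (intro cong_diff)
  then show ?thesis
    by (simp add: algebra_simps)
qed

lemma sum_fst_shift:
  fixes E :: "int \<Rightarrow> 'b::comm_ring_1"
  assumes "fiber_B_cong"
    and E_cong: "\<And>t t'. [t = t'] (mod q) \<Longrightarrow> E t = E t'"
    and E_add: "\<And>t t'. E (t + t') = E t * E t'"
  shows "(\<Sum>ab\<in>A \<times> B. E (fst ab)) = E h * (\<Sum>ab\<in>A \<times> B. E (fst ab))"
proof -
  define rep where "rep = inv_into (A \<times> B) (\<lambda>(a, b). (a + b) mod M)"
  have rep_bij: "bij_betw rep (ZM M) (A \<times> B)"
    unfolding rep_def by (rule bij_betw_inv_into[OF tiling_imp_bij_betw[OF M_pos tiling]])
  have rep_shift: "E (fst (rep ((y + h) mod M))) = E h * E (fst (rep y))" if "y \<in> ZM M" for y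
  proof -
    have "(y + h) mod M \<in> ZM M"
      using M_pos unfolding ZM_def by simp
    have "[fst (rep ((y + h) mod M)) + snd (rep ((y + h) mod M)) = (y + h) mod M] (mod M)"
      using tiling_rep(2)[OF M_pos tiling \<open>(y + h) mod M \<in> ZM M\<close>] unfolding rep_def .
    then have "[fst (rep ((y + h) mod M)) + snd (rep ((y + h) mod M)) = y + h] (mod M)"
      by (simp only: cong_mod_right)
    also have "[y + h = fst (rep y) + snd (rep y) + h] (mod M)"
      using cong_add[OF cong_sym[OF tiling_rep(2)[OF M_pos tiling that]] cong_refl[of h]]
      unfolding rep_def .
    finally have "[fst (rep ((y + h) mod M)) = fst (rep y) + h] (mod q)"
      using tiling_rep(1)[OF M_pos tiling that] tiling_rep(1)[OF M_pos tiling \<open>(y + h) mod M \<in> ZM M\<close>]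
      unfolding rep_def[symmetric] by (intro fiber_B_cong_shift[OF assms(1)]) (simp_all add: mem_Times_iff)
    then show ?thesis
      using E_cong E_add by (simp add: mult.commute)
  qed
  have "(\<Sum>ab\<in>A \<times> B. E (fst ab)) = (\<Sum>y\<in>ZM M. E (fst (rep y)))"
    by (rule sum.reindex_bij_betw[OF rep_bij, symmetric])
  also have "\<dots> = (\<Sum>y\<in>ZM M. E (fst (rep ((y + h) mod M))))"
    by (rule sum.reindex_bij_betw[OF bij_betw_shift_ZM[OF M_pos], symmetric])
  also have "\<dots> = E h * (\<Sum>y\<in>ZM M. E (fst (rep y)))"
    by (simp add: rep_shift sum_distrib_left)
  also have "(\<Sum>y\<in>ZM M. E (fst (rep y))) = (\<Sum>ab\<in>A \<times> B. E (fst ab))"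
    by (rule sum.reindex_bij_betw[OF rep_bij])
  finally show ?thesis .
qed

lemma cyclotomic_dvd_mask_poly:
  assumes "fiber_B_cong"
  shows "cyclotomic (nat q) dvd mask_poly A"
proof (rule cyclotomic_dvdI)
  show "nat q > 0"
    using p_gt_1 by simp
  fix k assume "k < nat q" and "coprime k (nat q)"
  moreover have "int (nat q) = q"
    using p_gt_1 by simp
  ultimately have "coprime (int k) q"
    using coprime_int_iff[of k "nat q"] by simp
  define \<theta> where "\<theta> = 2 * pi * real k / real (nat q)"
  define E where "E t = cis (of_int t * \<theta>)" for t
  have E_add: "E (t + t') = E t * E t'" for t t'
    unfolding E_def by (simp add: cis_mult distrib_right)
  have E_eq_1_iff: "E t = 1 \<longleftrightarrow> q dvd int k * t" for t
  proof -
    have "of_int t * \<theta> = 2 * pi * of_int (int k * t) / of_int q"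
      unfolding \<theta>_def using p_gt_1 by simp
    then show ?thesis
      unfolding E_def using cis_2pi_ratio_eq_1_iff[of q "int k * t"] p_gt_1 by simp
  qed
  have E_cong: "E t = E t'" if "[t = t'] (mod q)" for t t'
  proof -
    have "E (t - t') = 1"
      using that by (simp add: E_eq_1_iff cong_iff_dvd_diff)
    then show ?thesis
      using E_add[of t' "t - t'"] by simp
  qed
  have "E h \<noteq> 1"
    using \<open>coprime (int k) q\<close> not_q_dvd_h
    by (simp add: E_eq_1_iff coprime_dvd_mult_right_iff coprime_commute)
  then have "(\<Sum>ab\<in>A \<times> B. E (fst ab)) = 0"
    using sum_fst_shift[OF assms E_cong E_add] by (metis mult_cancel_right1 mult.commute)
  moreover have "(\<Sum>ab\<in>A \<times> B. E (fst ab)) = of_nat (card B) * (\<Sum>a\<in>A. E a)"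
    by (simp add: sum.cartesian_product' sum_distrib_left)
  moreover have "card B \<noteq> 0"
    using tiling_B_nonempty finite_B by simp
  moreover have "poly (mask_poly A) (cis \<theta>) = (\<Sum>a\<in>A. E a)"
    using A_subset unfolding E_def ZM_def by (intro poly_mask_poly_cis) auto
  ultimately show "poly (mask_poly A) (cis (2 * pi * real k / real (nat q))) = 0"
    unfolding \<theta>_def by simp
qed

end

theorem lemma5p4:
  fixes M p :: int and A B :: "int set"
  assumes "M > 0" and "prime p" and "p dvd M"
    and "tiling M A B"
  defines "n \<equiv> multiplicity p M"
  shows "((cyclotomic (nat (p ^ n)) dvd mask_poly A \<and>
           (\<forall>m. m > 0 \<longrightarrow> p ^ n dvd m \<longrightarrow> m dvd M \<longrightarrow>
                 m \<in> Div M A \<longrightarrow> m div p \<notin> Div M B))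
         \<longleftrightarrow>
         (\<forall>r\<in>units_ZM M. \<forall>z\<in>ZM M.
              splits_parity M p n (dil M r B) A (fiber M p z)))
       \<and>
         ((\<forall>r\<in>units_ZM M. \<forall>z\<in>ZM M.
              splits_parity M p n (dil M r B) A (fiber M p z))
         \<longleftrightarrow>
         (\<forall>a\<in>A. \<forall>b\<in>B. \<forall>x\<in>fiber M p a. A_xy M A B x b \<subseteq> Pi_plane M x (p ^ n)))"
proof -
  interpret prime_fibers_tiling M p n A B
    using assms by unfold_locales simp_all
  show ?thesis
    using uniform_splitting_iff_fiber_B_cong A_xy_subset_iff_fiber_B_cong
      Div_condition_iff_fiber_B_cong cyclotomic_dvd_mask_poly by blast
qed

end
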